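(* In the setting below, assume that $g(x)$ and $l(x)$ are both self-reciprocal. If $\gcd\big(r_{22}(x),\ g_{11}(x)\bar g_{11}(x)+g_{12}(x)\bar g_{12}(x)\big)\neq 1$, then $C$ is not Euclidean LCD.
   Context: Let $q$ be a prime power, $F=\mathbb{F}_q$, $m\ge1$ with $\gcd(q,m)=1$, and $R=F[x]/\langle x^m-1\rangle$; elements of $R$ are represented by polynomials of degree $<m$ and identified with their coefficient vectors in $F^m$. A quasi-cyclic code of length $2m$ and index $2$ is an $R$-submodule $C\subseteq R^2$. The Euclidean inner product of $(a_1,a_2),(b_1,b_2)\in R^2$ is the sum of the standard dot products of the coefficient vectors of $a_1,b_1$ and of $a_2,b_2$; $C$ is Euclidean LCD if $C\cap C^{\perp_e}=\{0\}$. For a nonzero polynomial $f$ of degree $k$, $f^*(x)=x^kf(x^{-1})$; $f$ is self-reciprocal if $f^*=\alpha f$ for some $\alpha\in F$. For a polynomial $f$ of degree at most $m$, $\bar f(x)=x^m f(x^{-1})$. Suppose $C$ is generated as an $R$-module by $(g_{11}(x),g_{12}(x))$ and $(0,g_{22}(x))$, where $g_{11},g_{12},g_{22}\in F[x]$ satisfy: $g_{11}\mid x^m-1$, $g_{22}\mid x^m-1$, $\deg g_{12}<\deg g_{22}$, and $g_{11}g_{22}\mid (x^m-1)g_{12}$. Define $g=\gcd(g_{11},g_{22})$, $l=(x^m-1)/\mathrm{lcm}(g_{11},g_{22})$, $g_{22}=g\,g_{22}'$, $r_{22}=\gcd(g_{22}',g_{22}'^* )$. *)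

theory Defs
  imports "HOL-Computational_Algebra.Computational_Algebra"
begin

definition xm1 :: "nat \<Rightarrow> 'a::comm_ring_1 poly" where
  "xm1 m = monom 1 m - 1"

text \<open>R = F[x]/(x^m-1), represented by polynomials of degree < m (m \<ge> 1).\<close>
definition Rset :: "nat \<Rightarrow> 'a::zero poly set" where
  "Rset m = {p. degree p < m}"

text \<open>The R-submodule of R^2 generated by (g11,g12) and (0,g22): all R-linear
  combinations r1*(g11,g12) + r2*(0,g22), with products reduced mod x^m-1.\<close>
definition qc_code :: "nat \<Rightarrow> 'a::field poly \<Rightarrow> 'a poly \<Rightarrow> 'a poly \<Rightarrow> ('a poly \<times> 'a poly) set" where
  "qc_code m g11 g12 g22 =
     {((r1 * g11) mod xm1 m, (r1 * g12 + r2 * g22) mod xm1 m) | r1 r2.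
        r1 \<in> Rset m \<and> r2 \<in> Rset m}"

definition euc_inner :: "nat \<Rightarrow> ('a::comm_ring_1 poly \<times> 'a poly) \<Rightarrow> ('a poly \<times> 'a poly) \<Rightarrow> 'a" where
  "euc_inner m u v =
     (\<Sum>i<m. coeff (fst u) i * coeff (fst v) i) + (\<Sum>i<m. coeff (snd u) i * coeff (snd v) i)"

definition euc_dual :: "nat \<Rightarrow> ('a::comm_ring_1 poly \<times> 'a poly) set \<Rightarrow> ('a poly \<times> 'a poly) set" where
  "euc_dual m C = {v. fst v \<in> Rset m \<and> snd v \<in> Rset m \<and> (\<forall>c\<in>C. euc_inner m c v = 0)}"

definition euclidean_LCD :: "nat \<Rightarrow> ('a::comm_ring_1 poly \<times> 'a poly) set \<Rightarrow> bool" where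
  "euclidean_LCD m C \<longleftrightarrow> C \<inter> euc_dual m C = {(0, 0)}"

text \<open>f^*(x) = x^(deg f) f(1/x) is the library's reflect_poly.\<close>
definition self_reciprocal :: "'a::field poly \<Rightarrow> bool" where
  "self_reciprocal f \<longleftrightarrow> f \<noteq> 0 \<and> (\<exists>\<alpha>. reflect_poly f = smult \<alpha> f)"

text \<open>bar f (x) = x^m f(1/x), for degree f \<le> m.\<close>
definition bar :: "nat \<Rightarrow> 'a::comm_ring_1 poly \<Rightarrow> 'a poly" where
  "bar m f = monom 1 (m - degree f) * reflect_poly f"

end

theory Submission
  imports Defs "HOL-Number_Theory.Residues"
begin

hide_const (open) up_ring.coeff up_ring.monom module.smult

text \<open>
  Let k be a common non-unit factor of g22', its reciprocal and S = g11 bar g11 + g12 bar g12,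
  and put r = (x^m - 1)/k. The codeword v = r (g11, g12) of C is Euclidean-orthogonal to C:
  on R the Euclidean product is invariant under multiplication by x, so multiplication by p is
  adjoint to multiplication by bar p, and the products of v with the two generators reduce to
  multiples of r S and of r bar g22, both divisible by x^m - 1 since k divides S and bar g22.
  It is non-zero, for otherwise k divides g11, hence gcd g11 g22, and k^2 divides the
  separable polynomial x^m - 1.
\<close>

lemma coeff_xm1:
  "coeff (xm1 m :: 'a::comm_ring_1 poly) i = (if i = m then 1 else 0) - (if i = 0 then 1 else 0)"
  by (simp add: xm1_def)

lemma degree_xm1: "m \<ge> 1 \<Longrightarrow> degree (xm1 m :: 'a::comm_ring_1 poly) = m"
proof -
  assume m: "m \<ge> 1"
  have "degree (xm1 m :: 'a poly) \<le> m" unfolding xm1_def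
    by (rule degree_diff_le) (auto simp: degree_monom_le)
  moreover have "coeff (xm1 m :: 'a poly) m \<noteq> 0" using m by (simp add: coeff_xm1)
  hence "m \<le> degree (xm1 m :: 'a poly)" by (rule le_degree)
  ultimately show ?thesis by simp
qed

lemma xm1_neq_0: "m \<ge> 1 \<Longrightarrow> xm1 m \<noteq> (0::'a::comm_ring_1 poly)"
  using degree_xm1[of m] by (metis degree_0 not_one_le_zero)

lemma degree_le_if_dvd_xm1:
  fixes p :: "'a::field poly"
  assumes "m \<ge> 1" and "p dvd xm1 m"
  shows "degree p \<le> m"
  using dvd_imp_degree_le[OF assms(2) xm1_neq_0[OF assms(1)]] degree_xm1[OF assms(1), where 'a='a]
  by simp

lemma mod_xm1_in_Rset:
  assumes "m \<ge> 1"
  shows "(p :: 'a::field poly) mod xm1 m \<in> Rset m"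
proof -
  have "degree (xm1 m :: 'a poly) = m" using degree_xm1[OF assms] .
  thus ?thesis using degree_mod_less[OF xm1_neq_0[OF assms], of p] assms by (auto simp: Rset_def)
qed

lemma x_mult_mod_xm1:
  fixes a :: "'a::field poly"
  assumes m: "m \<ge> 1"
  shows "(monom 1 1 * a) mod xm1 m
           = monom 1 1 * (a mod xm1 m) - smult (coeff (a mod xm1 m) (m - 1)) (xm1 m)"
proof -
  define X where "X = (xm1 m :: 'a poly)"
  define a0 where "a0 = a mod X"
  define t where "t = monom 1 1 * a0 - smult (coeff a0 (m - 1)) X"
  have X0: "X \<noteq> 0" and dX: "degree X = m"
    using m by (auto simp: X_def xm1_neq_0 degree_xm1)
  have "a0 = 0 \<or> degree a0 < m" using degree_mod_less[OF X0, of a] dX a0_def by auto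
  hence high_a0: "\<And>j. j \<ge> m \<Longrightarrow> coeff a0 j = 0"
    by (metis coeff_0 coeff_eq_0 le_less_trans not_le)
  have "coeff t i = 0" if "i > m - 1" for i
  proof (cases "i = m")
    case True thus ?thesis using m unfolding t_def X_def
      by (simp add: coeff_monom_mult coeff_xm1)
  next
    case False thus ?thesis using m that high_a0[of "i - 1"] unfolding t_def X_def
      by (simp add: coeff_monom_mult coeff_xm1)
  qed
  hence "degree t \<le> m - 1" by (intro degree_le) blast
  hence dt: "degree t < degree X" using m dX by auto
  have "(monom 1 1 * a) mod X = (monom 1 1 * a0) mod X"
    unfolding a0_def by (simp add: mod_mult_right_eq)
  also have "monom 1 1 * a0 = t + [:coeff a0 (m - 1):] * X" by (simp add: t_def)
  also have "(t + [:coeff a0 (m - 1):] * X) mod X = t"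
    by (simp only: mod_mult_self1 mod_poly_less[OF dt])
  finally show ?thesis by (simp add: t_def a0_def X_def)
qed

definition cyc_inner :: "nat \<Rightarrow> 'a::field poly \<Rightarrow> 'a poly \<Rightarrow> 'a" where
  "cyc_inner m a b = (\<Sum>i<m. coeff (a mod xm1 m) i * coeff (b mod xm1 m) i)"

lemma cyc_inner_mod_right: "cyc_inner m a (b mod xm1 m) = cyc_inner m a b"
  by (simp add: cyc_inner_def)

lemma cyc_inner_add_left: "cyc_inner m (a + a') b = cyc_inner m a b + cyc_inner m a' b"
  by (simp add: cyc_inner_def poly_mod_add_left sum.distrib distrib_right)

lemma cyc_inner_add_right: "cyc_inner m b (a + a') = cyc_inner m b a + cyc_inner m b a'"
  by (simp add: cyc_inner_def poly_mod_add_left sum.distrib distrib_left)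

lemma cyc_inner_smult_left: "cyc_inner m (smult c a) b = c * cyc_inner m a b"
  by (simp add: cyc_inner_def mod_smult_left sum_distrib_left mult.assoc)

lemma cyc_inner_smult_right: "cyc_inner m b (smult c a) = c * cyc_inner m b a"
  by (simp add: cyc_inner_def mod_smult_left sum_distrib_left mult.left_commute)

lemma cyc_inner_sum_left:
  "finite A \<Longrightarrow> cyc_inner m (sum f A) b = (\<Sum>k\<in>A. cyc_inner m (f k) b)"
  by (induction A rule: finite_induct) (auto simp: cyc_inner_add_left, simp add: cyc_inner_def)

lemma cyc_inner_sum_right:
  "finite A \<Longrightarrow> cyc_inner m b (sum f A) = (\<Sum>k\<in>A. cyc_inner m b (f k))"
  by (induction A rule: finite_induct) (auto simp: cyc_inner_add_right, simp add: cyc_inner_def)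

lemma cyc_inner_eq_0_if_dvd_right: "xm1 m dvd b \<Longrightarrow> cyc_inner m a b = 0"
  by (simp add: cyc_inner_def)

lemma cyc_inner_x_mult:
  fixes a b :: "'a::field poly"
  assumes m: "m \<ge> 1"
  shows "cyc_inner m (monom 1 1 * a) (monom 1 1 * b) = cyc_inner m a b"
proof -
  obtain n where n: "m = Suc n" using m by (cases m) auto
  define a0 where "a0 = a mod xm1 m"
  define b0 where "b0 = b mod xm1 m"
  have "cyc_inner m (monom 1 1 * a) (monom 1 1 * b) =
     (\<Sum>i<Suc n. coeff (monom 1 1 * a0 - smult (coeff a0 n) (xm1 m)) i *
                  coeff (monom 1 1 * b0 - smult (coeff b0 n) (xm1 m)) i)"
    using x_mult_mod_xm1[OF m, of a] x_mult_mod_xm1[OF m, of b]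
    unfolding cyc_inner_def a0_def b0_def n by simp
  also have "\<dots> = coeff a0 n * coeff b0 n + (\<Sum>i<n. coeff a0 i * coeff b0 i)"
    unfolding sum.lessThan_Suc_shift using n by (simp add: coeff_monom_mult coeff_xm1)
  also have "\<dots> = cyc_inner m a b" unfolding cyc_inner_def a0_def b0_def n by simp
  finally show ?thesis .
qed

lemma cyc_inner_monom_mult:
  fixes a b :: "'a::field poly"
  assumes m: "m \<ge> 1"
  shows "cyc_inner m (monom 1 k * a) (monom 1 k * b) = cyc_inner m a b"
proof (induction k)
  case 0 thus ?case by (simp add: monom_0 one_pCons[symmetric])
next
  case (Suc k)
  have "monom (1::'a) (Suc k) = monom 1 1 * monom 1 k" by (simp add: mult_monom)
  thus ?case by (simp only: mult.assoc cyc_inner_x_mult[OF m] Suc)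
qed

lemma cyc_inner_monom_mult_left:
  fixes a b :: "'a::field poly"
  assumes m: "m \<ge> 1" and k: "k \<le> m"
  shows "cyc_inner m (monom 1 k * a) b = cyc_inner m a (monom 1 (m - k) * b)"
proof -
  have "monom 1 m * b = b + b * xm1 m" by (simp add: xm1_def algebra_simps)
  hence "(monom 1 m * b) mod xm1 m = b mod xm1 m" by simp
  hence "cyc_inner m (monom 1 k * a) b = cyc_inner m (monom 1 k * a) (monom 1 m * b)"
    by (metis cyc_inner_mod_right)
  also have "monom (1::'a) m = monom 1 k * monom 1 (m - k)" using k by (simp add: mult_monom)
  finally show ?thesis by (simp add: mult.assoc cyc_inner_monom_mult[OF m])
qed

lemma bar_eq_sum_monom:
  fixes p :: "'a::comm_ring_1 poly"
  assumes d: "degree p \<le> m"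
  shows "bar m p = (\<Sum>k\<le>degree p. monom (coeff p k) (m - k))"
proof (rule poly_eqI)
  fix j
  have "coeff (\<Sum>k\<le>degree p. monom (coeff p k) (m - k)) j =
        (\<Sum>k\<le>degree p. if k = m - j \<and> j \<le> m then coeff p k else 0)"
    unfolding coeff_sum using d by (intro sum.cong refl) auto
  also have "\<dots> = (if m - j \<le> degree p \<and> j \<le> m then coeff p (m - j) else 0)"
    by (cases "j \<le> m") simp_all
  also have "\<dots> = coeff (bar m p) j"
    unfolding bar_def coeff_monom_mult coeff_reflect_poly using d by (auto simp: not_less)
  finally show "coeff (bar m p) j = coeff (\<Sum>k\<le>degree p. monom (coeff p k) (m - k)) j"
    by simp
qed

lemma reflect_poly_dvd_bar_mult: "reflect_poly q dvd bar m (p * q :: 'a::idom poly)"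
  unfolding bar_def reflect_poly_mult by simp

lemma cyc_inner_mult_left:
  fixes p a b :: "'a::field poly"
  assumes m: "m \<ge> 1" and d: "degree p \<le> m"
  shows "cyc_inner m (p * a) b = cyc_inner m a (bar m p * b)"
proof -
  have "p * a = (\<Sum>k\<le>degree p. smult (coeff p k) (monom 1 k * a))"
    by (subst (1) poly_as_sum_of_monoms[symmetric])
       (simp add: sum_distrib_right smult_monom_mult)
  hence "cyc_inner m (p * a) b = (\<Sum>k\<le>degree p. coeff p k * cyc_inner m (monom 1 k * a) b)"
    by (simp add: cyc_inner_sum_left cyc_inner_smult_left)
  also have "\<dots> = (\<Sum>k\<le>degree p. coeff p k * cyc_inner m a (monom 1 (m - k) * b))"
    using d by (intro sum.cong refl) (simp add: cyc_inner_monom_mult_left[OF m])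
  also have "\<dots> = cyc_inner m a (\<Sum>k\<le>degree p. smult (coeff p k) (monom 1 (m - k) * b))"
    by (simp add: cyc_inner_sum_right cyc_inner_smult_right)
  also have "(\<Sum>k\<le>degree p. smult (coeff p k) (monom 1 (m - k) * b)) = bar m p * b"
    unfolding bar_eq_sum_monom[OF d] by (simp add: sum_distrib_right smult_monom_mult)
  finally show ?thesis .
qed

lemma of_nat_neq_0_if_coprime_card:
  assumes "coprime (card (UNIV :: 'a::{field,finite} set)) m"
  shows "(of_nat m :: 'a) \<noteq> 0"
proof
  assume "(of_nat m :: 'a) = 0"
  hence "CHAR('a) dvd m" by (simp add: of_nat_eq_0_iff_char_dvd)
  moreover have "CHAR('a) dvd card (UNIV :: 'a set)" by (rule CHAR_dvd_CARD)
  ultimately have "CHAR('a) = 1" using assms coprime_common_divisor_nat by blast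
  hence "(of_nat 1 :: 'a) = 0" by (metis of_nat_CHAR)
  thus False by simp
qed

text \<open>A repeated factor of x^m - 1 divides its derivative, hence x X' - m X = m.\<close>

lemma square_dvd_xm1_imp_unit:
  fixes k :: "'a::field poly"
  assumes m: "m \<ge> 1" and m0: "(of_nat m :: 'a) \<noteq> 0" and kk: "k * k dvd xm1 m"
  shows "is_unit k"
proof -
  obtain w where w: "xm1 m = k * (k * w)" using kk by (metis dvdE mult.assoc)
  have "pderiv (xm1 m) = k * pderiv (k * w) + pderiv k * (k * w)"
    unfolding w by (simp add: pderiv_mult)
  hence "k dvd pderiv (xm1 m)" by (simp add: mult.left_commute)
  moreover have "k dvd xm1 m" using w by simp
  ultimately have "k dvd monom 1 1 * pderiv (xm1 m) - smult (of_nat m) (xm1 m)"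
    by (intro dvd_diff dvd_mult dvd_smult)
  also have "monom 1 1 * pderiv (xm1 m) - smult (of_nat m) (xm1 m) = [:(of_nat m :: 'a):]"
    using m by (simp add: xm1_def pderiv_diff pderiv_monom mult_monom smult_diff_right
        smult_monom monom_0)
  finally have "k dvd [:(of_nat m :: 'a):]" .
  moreover have "is_unit [:(of_nat m :: 'a):]" using m0 by (simp add: is_unit_pCons_iff)
  ultimately show ?thesis using dvd_unit_imp_unit by blast
qed

lemma dvd_gcd_cofactor_and_left_imp_unit:
  fixes k g11 g22 :: "'a::field_gcd poly"
  assumes m: "m \<ge> 1" and m0: "(of_nat m :: 'a) \<noteq> 0" and g22: "g22 dvd xm1 m"
    and k_cofactor: "k dvd g22 div gcd g11 g22" and k_g11: "k dvd g11"
  shows "is_unit k"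
proof (rule square_dvd_xm1_imp_unit[OF m m0])
  have "g22 = gcd g11 g22 * (g22 div gcd g11 g22)" by simp
  hence "k dvd gcd g11 g22" using k_g11 k_cofactor by (metis dvd_mult gcd_greatest)
  hence "k * k dvd gcd g11 g22 * (g22 div gcd g11 g22)" using k_cofactor by (rule mult_dvd_mono)
  thus "k * k dvd xm1 m" using g22 by (simp add: dvd_trans)
qed

lemma qc_code_first_generator_mult:
  "m \<ge> 1 \<Longrightarrow> ((r * g11) mod xm1 m, (r * g12) mod xm1 m) \<in> qc_code m g11 g12 g22"
  unfolding qc_code_def
  by (rule CollectI, rule exI[of _ "r mod xm1 m"], rule exI[of _ 0])
     (simp add: mod_xm1_in_Rset mod_mult_left_eq, simp add: Rset_def)

lemma qc_code_first_generator_mult_in_dual: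
  fixes g11 g12 g22 r :: "'a::field poly"
  assumes m: "m \<ge> 1" and d11: "degree g11 \<le> m" and d12: "degree g12 \<le> m"
    and d22: "degree g22 \<le> m"
    and X: "xm1 m = k * r" and k_S: "k dvd g11 * bar m g11 + g12 * bar m g12"
    and k_bar: "k dvd bar m g22"
  shows "((r * g11) mod xm1 m, (r * g12) mod xm1 m) \<in> euc_dual m (qc_code m g11 g12 g22)"
  unfolding euc_dual_def
proof (intro CollectI conjI ballI)
  show "fst ((r * g11) mod xm1 m, (r * g12) mod xm1 m) \<in> Rset m"
    and "snd ((r * g11) mod xm1 m, (r * g12) mod xm1 m) \<in> Rset m"
    using m by (simp_all add: mod_xm1_in_Rset)
next
  fix c assume "c \<in> qc_code m g11 g12 g22"
  then obtain r1 r2 where c: "c = ((r1 * g11) mod xm1 m, (r1 * g12 + r2 * g22) mod xm1 m)"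
    unfolding qc_code_def by blast
  have "euc_inner m c ((r * g11) mod xm1 m, (r * g12) mod xm1 m)
        = cyc_inner m (g11 * r1) (r * g11) + cyc_inner m (g12 * r1 + g22 * r2) (r * g12)"
    unfolding euc_inner_def cyc_inner_def c by (simp add: mult.commute)
  also have "\<dots> = cyc_inner m r1 (r * (g11 * bar m g11 + g12 * bar m g12))
                 + cyc_inner m r2 (r * bar m g22 * g12)"
    by (simp add: cyc_inner_add_left cyc_inner_add_right[symmetric] algebra_simps
        cyc_inner_mult_left[OF m d11] cyc_inner_mult_left[OF m d12] cyc_inner_mult_left[OF m d22])
  also have "\<dots> = 0"
  proof -
    have "xm1 m dvd r * (g11 * bar m g11 + g12 * bar m g12)"
      unfolding X mult.commute[of k] by (rule mult_dvd_mono[OF dvd_refl k_S])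
    moreover have "xm1 m dvd r * bar m g22 * g12"
      unfolding X mult.commute[of k] by (intro dvd_mult2 mult_dvd_mono[OF dvd_refl k_bar])
    ultimately show ?thesis by (simp add: cyc_inner_eq_0_if_dvd_right)
  qed
  finally show "euc_inner m c ((r * g11) mod xm1 m, (r * g12) mod xm1 m) = 0" .
qed

theorem lemma3p5:
  fixes m :: nat and g11 g12 g22 :: "'a::{field_gcd,finite} poly"
  assumes "m \<ge> 1"
    and "coprime (card (UNIV :: 'a set)) m"
    and "g11 dvd xm1 m" and "g22 dvd xm1 m"
    and "g12 = 0 \<or> degree g12 < degree g22"
    and "g11 * g22 dvd xm1 m * g12"
    and "self_reciprocal (gcd g11 g22)"
    and "self_reciprocal (xm1 m div lcm g11 g22)"
    and "gcd (gcd (g22 div gcd g11 g22) (reflect_poly (g22 div gcd g11 g22)))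
             (g11 * bar m g11 + g12 * bar m g12) \<noteq> 1"
  shows "\<not> euclidean_LCD m (qc_code m g11 g12 g22)"
proof -
  note m = assms(1)
  define g' where "g' = g22 div gcd g11 g22"
  define k where "k = gcd (gcd g' (reflect_poly g')) (g11 * bar m g11 + g12 * bar m g12)"
  have k_nonunit: "\<not> is_unit k" using assms(9) unfolding k_def g'_def by simp
  have k_g': "k dvd g'" and k_refl: "k dvd reflect_poly g'"
    and k_S: "k dvd g11 * bar m g11 + g12 * bar m g12"
    unfolding k_def by (meson gcd_dvd1 gcd_dvd2 dvd_trans)+
  have g22: "g22 = gcd g11 g22 * g'" unfolding g'_def by simp
  have k_bar: "k dvd bar m g22"
    by (subst g22) (rule dvd_trans[OF k_refl reflect_poly_dvd_bar_mult])
  have "k dvd g22" using k_g' g22 by (metis dvd_mult)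
  then obtain r where X: "xm1 m = k * r" using assms(4) by (metis dvd_trans dvdE)
  have v_dual: "((r * g11) mod xm1 m, (r * g12) mod xm1 m) \<in> euc_dual m (qc_code m g11 g12 g22)"
    using assms(3-5) degree_le_if_dvd_xm1[OF m, of g22]
    by (intro qc_code_first_generator_mult_in_dual[OF m degree_le_if_dvd_xm1[OF m] _ _ X k_S k_bar])
      auto
  have "\<not> k dvd g11"
    using dvd_gcd_cofactor_and_left_imp_unit[OF m of_nat_neq_0_if_coprime_card[OF assms(2)]
        assms(4)] k_g' k_nonunit unfolding g'_def by blast
  moreover have "r \<noteq> 0" using X xm1_neq_0[OF m] by auto
  ultimately have "(r * g11) mod xm1 m \<noteq> 0"
    unfolding mod_eq_0_iff_dvd X by (simp add: mult.commute[of r])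
  with v_dual qc_code_first_generator_mult[OF m] show ?thesis
    unfolding euclidean_LCD_def by (metis IntI prod.inject singletonD)
qed

end
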